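(* Let $0<\kappa_0\le1$, $0<\alpha_0\le1$, $T\ge8$, $M=4T\kappa_0^{-1}$, $\Lambda\subset\mathfrak T$, and let $w,D$ be as in the context with $D\in\mathcal G_{\Lambda,T,\kappa_0}$. If $\gamma=(n_1,\dots,n_k)\in\Gamma_{D,T,\kappa_0}(n_1,n_k;k,\Lambda,\mathfrak R)$, then $$W_{D,\kappa_0}(\gamma)\le\exp\big(kM^2-\kappa_0(1-2^{-9})\|\gamma\|+2\bar D(\gamma)\big).$$
   Context: $(\mathfrak T,+)$ is an Abelian group with $|\cdot|:\mathfrak T\to[0,\infty)$, $|m|=0$ iff $m=0$, $|m+n|\le|m|+|n|$. Fix $\Lambda\subset\mathfrak T$ and functions $w:\Lambda\times\Lambda\to[0,\infty)$, $D:\Lambda\to[1,\infty)$ with $w(m,m)=1$ and $w(m,n)\le\exp(-\kappa_0|m-n|^{\alpha_0})$. A trajectory is a finite sequence $\gamma=(n_1,\dots,n_k)$ of points of $\Lambda$, $k\ge1$, with $n_{j+1}\ne n_j$. Put $\|\gamma\|=\sum_{i=1}^{k-1}|n_i-n_{i+1}|^{\alpha_0}$ ($=0$ if $k=1$), $\bar D(\gamma)=\max_jD(n_j)$, $W_{D,\kappa_0}(\gamma)=\exp(-\kappa_0\|\gamma\|+\sum_{j=1}^kD(n_j))$. Let $\mu_\Lambda(m)=\inf\{|m-n|:n\in\mathfrak T\setminus\Lambda\}$. $D\in\mathcal G_{\Lambda,T,\kappa_0}$ means: $D(m)\le T\mu_\Lambda(m)^{\alpha_0/5}$ for every $m$ with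 $D(m)\ge4T\kappa_0^{-1}$. For $D\in\mathcal G_{\Lambda,T,\kappa_0}$, $\Gamma_{D,T,\kappa_0}(n_1,n_k;k,\Lambda,\mathfrak R)$ is the set of trajectories $\gamma=(n_1,\dots,n_k)$ such that: (A) for all $i<j$ with $j\ge i+2$ and $\min(D(n_i),D(n_j))\ge4T\kappa_0^{-1}$ one has $\min(D(n_i),D(n_j))\le T\|(n_i,\dots,n_j)\|^{\alpha_0/5}$; and (B) if for some $i$ one has $\min(D(n_i),D(n_{i+1}))\ge4T\kappa_0^{-1}$ and $\min(D(n_i),D(n_{i+1}))>T|n_i-n_{i+1}|^{\alpha_0/5}$, then for all $j'<i<i+1<j''$: $\min(D(n_{j'}),D(n_i))\le T\|(n_{j'},\dots,n_i)\|^{\alpha_0/5}$, $\min(D(n_i),D(n_{j''}))\le T\|(n_i,\dots,n_{j''})\|^{\alpha_0/5}$, $\min(D(n_{j'}),D(n_{i+1}))\le T\|(n_{j'},\dots,n_{i+1})\|^{\alpha_0/5}$, $\min(D(n_{i+1}),D(n_{j''}))\le T\|(n_{i+1},\dots,n_{j''})\|^{\alpha_0/5}$. *)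

theory Defs
  imports Complex_Main
begin

(* Trajectories are lists ns = [n_1,...,n_k] (0-based indices in Isabelle). *)

definition is_trajectory :: "'a set \<Rightarrow> 'a list \<Rightarrow> bool" where
  "is_trajectory \<Lambda> ns \<longleftrightarrow> ns \<noteq> [] \<and> set ns \<subseteq> \<Lambda> \<and>
     (\<forall>j. Suc j < length ns \<longrightarrow> ns ! Suc j \<noteq> ns ! j)"

definition seg_norm :: "('a::ab_group_add \<Rightarrow> real) \<Rightarrow> real \<Rightarrow> 'a list \<Rightarrow> nat \<Rightarrow> nat \<Rightarrow> real" where
  "seg_norm nrm \<alpha>0 ns i j = (\<Sum>l\<in>{i..<j}. nrm (ns ! l - ns ! Suc l) powr \<alpha>0)"

definition traj_norm :: "('a::ab_group_add \<Rightarrow> real) \<Rightarrow> real \<Rightarrow> 'a list \<Rightarrow> real" where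
  "traj_norm nrm \<alpha>0 ns = seg_norm nrm \<alpha>0 ns 0 (length ns - 1)"

definition Dbar :: "('a \<Rightarrow> real) \<Rightarrow> 'a list \<Rightarrow> real" where
  "Dbar D ns = Max (D ` set ns)"

definition W_weight :: "('a::ab_group_add \<Rightarrow> real) \<Rightarrow> real \<Rightarrow> ('a \<Rightarrow> real) \<Rightarrow> real \<Rightarrow> 'a list \<Rightarrow> real" where
  "W_weight nrm \<alpha>0 D \<kappa>0 ns = exp (- \<kappa>0 * traj_norm nrm \<alpha>0 ns + (\<Sum>j<length ns. D (ns ! j)))"

(* D \<in> G_{\<Lambda>,T,\<kappa>0}: D(m) \<le> T \<mu>_\<Lambda>(m)^(\<alpha>0/5) whenever D(m) \<ge> 4T/\<kappa>0, where
   \<mu>_\<Lambda>(m) = inf{|m-n| : n \<notin> \<Lambda>} (= +\<infinity> if \<Lambda> is everything). Since t \<mapsto> T t^(\<alpha>0/5)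
   is continuous and nondecreasing on [0,\<infinity>), this is the same as the bound against
   every n outside \<Lambda>. *)
definition in_G :: "('a::ab_group_add \<Rightarrow> real) \<Rightarrow> real \<Rightarrow> 'a set \<Rightarrow> real \<Rightarrow> real \<Rightarrow> ('a \<Rightarrow> real) \<Rightarrow> bool" where
  "in_G nrm \<alpha>0 \<Lambda> T \<kappa>0 D \<longleftrightarrow>
     (\<forall>m\<in>\<Lambda>. D m \<ge> 4 * T / \<kappa>0 \<longrightarrow> (\<forall>n. n \<notin> \<Lambda> \<longrightarrow> D m \<le> T * nrm (m - n) powr (\<alpha>0 / 5)))"

definition in_Gamma :: "('a::ab_group_add \<Rightarrow> real) \<Rightarrow> real \<Rightarrow> 'a set \<Rightarrow> real \<Rightarrow> real \<Rightarrow> ('a \<Rightarrow> real) \<Rightarrow> 'a list \<Rightarrow> bool" where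
  "in_Gamma nrm \<alpha>0 \<Lambda> T \<kappa>0 D ns \<longleftrightarrow>
     (let k = length ns; M = 4 * T / \<kappa>0; sn = seg_norm nrm \<alpha>0 ns;
          ok = (\<lambda>a b. min (D (ns ! a)) (D (ns ! b)) \<le> T * sn a b powr (\<alpha>0 / 5)) in
      is_trajectory \<Lambda> ns \<and>
      \<comment> \<open>(A)\<close>
      (\<forall>i j. i + 2 \<le> j \<and> j < k \<and> min (D (ns ! i)) (D (ns ! j)) \<ge> M \<longrightarrow> ok i j) \<and>
      \<comment> \<open>(B)\<close>
      (\<forall>i. Suc i < k \<and> min (D (ns ! i)) (D (ns ! Suc i)) \<ge> M \<and>
             min (D (ns ! i)) (D (ns ! Suc i)) > T * nrm (ns ! i - ns ! Suc i) powr (\<alpha>0 / 5) \<longrightarrow>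
           (\<forall>j'. j' < i \<longrightarrow> ok j' i \<and> ok j' (Suc i)) \<and>
           (\<forall>j''. Suc i < j'' \<and> j'' < k \<longrightarrow> ok i j'' \<and> ok (Suc i) j'')))"

end

theory Submission
  imports Defs
begin

(* Call a site n_j of the trajectory "large" if D(n_j) >= M = 4T/kappa0.
   Small sites contribute at most M <= M^2 each to the sum of the D(n_j).  For the large
   sites, condition (A) of Gamma says that two large sites at index distance >= 2 whose
   D-values are >= v are separated by a path segment of norm >= (v/T)^5.  Since the
   segment norm is additive along the trajectory, a set S of such sites forces
   (|S| - 2) (v/T)^5 <= 2 ||gamma||.  Removing the sites one by one in increasing order of
   D, the r-th smallest value is thus at most T (2||gamma||/(r-2))^(1/5), and summing these
   bounds (a discrete version of integrating x^(-1/5)) gives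
     sum_{large} D <= 2 Dbar + 5/4 T (2||gamma||)^(1/5) (|S|-2)^(4/5).
   A Young-type inequality turns the last term into (|S|-2) M^2 + 2^(-9) kappa0 ||gamma||. *)

lemma seg_norm_split:
  "i \<le> j \<Longrightarrow> j \<le> l \<Longrightarrow> seg_norm nrm \<alpha> ns i l = seg_norm nrm \<alpha> ns i j + seg_norm nrm \<alpha> ns j l"
  unfolding seg_norm_def by (simp add: sum.atLeastLessThan_concat)

lemma seg_norm_nonneg: "seg_norm nrm \<alpha> ns i j \<ge> 0"
  unfolding seg_norm_def by (simp add: sum_nonneg)

lemma seg_norm_le_traj_norm:
  assumes "i \<le> j" "j < length ns"
  shows "seg_norm nrm \<alpha> ns i j \<le> traj_norm nrm \<alpha> ns"
proof -
  have "traj_norm nrm \<alpha> ns = seg_norm nrm \<alpha> ns 0 i + seg_norm nrm \<alpha> ns i (length ns - 1)"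
    unfolding traj_norm_def using assms by (intro seg_norm_split) auto
  also have "seg_norm nrm \<alpha> ns i (length ns - 1)
             = seg_norm nrm \<alpha> ns i j + seg_norm nrm \<alpha> ns j (length ns - 1)"
    using assms by (intro seg_norm_split) auto
  finally show ?thesis using seg_norm_nonneg[of nrm \<alpha> ns] by (smt (verit))
qed

(* If sg is a nonnegative additive interval function and any two points of S at index
   distance >= 2 are L-separated, then S spans an interval of sg-length >= (|S|-2) L / 2:
   the points with even rank (from the top) give disjoint intervals of length >= L each. *)
lemma separated_points_count:
  fixes sg :: "nat \<Rightarrow> nat \<Rightarrow> real" and L :: real
  assumes split: "\<And>i j l. i \<le> j \<Longrightarrow> j \<le> l \<Longrightarrow> sg i l = sg i j + sg j l"
    and nonneg: "\<And>i j. sg i j \<ge> 0" and L: "L \<ge> 0"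
    and sep: "\<And>a b. a \<in> S \<Longrightarrow> b \<in> S \<Longrightarrow> a + 2 \<le> b \<Longrightarrow> L \<le> sg a b"
    and fin: "finite S" and ne: "S \<noteq> {}"
  shows "(real (card S) - 2) * L \<le> 2 * sg (Min S) (Max S)"
  using fin ne sep
proof (induction "card S" arbitrary: S rule: less_induct)
  case less
  show ?case
  proof (cases "card S \<le> 2")
    case True
    then have "(real (card S) - 2) * L \<le> 0" using L by (simp add: mult_nonpos_nonneg)
    also have "0 \<le> 2 * sg (Min S) (Max S)" using nonneg by simp
    finally show ?thesis .
  next
    case False
    \<comment> \<open>Remove the two largest points m > m1; the next one m2 is L-separated from m.\<close>
    define m where "m = Max S"
    define S1 where "S1 = S - {m}"
    define m1 where "m1 = Max S1"
    define S2 where "S2 = S1 - {m1}"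
    define m2 where "m2 = Max S2"
    have mS: "m \<in> S" using less m_def by auto
    have S1: "finite S1" "card S1 = card S - 1" using mS less by (auto simp: S1_def)
    then have "S1 \<noteq> {}" using False by auto
    then have m1S1: "m1 \<in> S1" using S1 m1_def by auto
    have S2: "finite S2" "card S2 = card S - 2" using m1S1 S1 by (auto simp: S2_def)
    then have S2_ne: "S2 \<noteq> {}" using False by auto
    then have m2S2: "m2 \<in> S2" using S2 m2_def by auto
    have m1m: "m1 < m" using m1S1 less(2) m_def S1_def
      by (metis Diff_iff Max_ge insertI1 order_le_neq_trans)
    have m2m1: "m2 < m1" using m2S2 S1 m1_def S2_def
      by (metis Diff_iff Max_ge insertI1 order_le_neq_trans)
    have S2S: "S2 \<subseteq> S" by (auto simp: S2_def S1_def)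
    have IH: "(real (card S2) - 2) * L \<le> 2 * sg (Min S2) m2"
      unfolding m2_def using S2 S2_ne False less(4) S2S by (intro less(1)) auto
    have "Min S \<le> Min S2" using S2S S2 S2_ne less(2) by (metis Min_antimono)
    moreover have "Min S2 \<le> m2" using S2 m2_def S2_ne by simp
    ultimately have sg_m: "sg (Min S) m = sg (Min S) (Min S2) + sg (Min S2) m2 + sg m2 m"
      using split m2m1 m1m by (metis less_imp_le order.trans)
    have "L \<le> sg m2 m" using less(4) m2S2 S2S mS m2m1 m1m by auto
    then have "(real (card S) - 2) * L \<le> 2 * sg (Min S) m"
      using IH sg_m S2(2) False nonneg[of "Min S" "Min S2"] by (simp add: algebra_simps)
    then show ?thesis using m_def by simp
  qed
qed

(* Discrete concavity of x^(4/5): for 0 <= a <= b, b^5 - a^5 <= 5/4 b (b^4 - a^4). *)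
lemma fifth_power_increment:
  fixes a b :: real
  assumes "0 \<le> a" "a \<le> b"
  shows "4 * (b^5 - a^5) \<le> 5 * b * (b^4 - a^4)"
proof -
  have "5 * b * (b^4 - a^4) - 4 * (b^5 - a^5) = (b-a)^2 * (b^3 + 2*a*b^2 + 3*a^2*b + 4*a^3)"
    by (simp add: algebra_simps power2_eq_square power3_eq_cube eval_nat_numeral)
  also have "\<dots> \<ge> 0" using assms by (intro mult_nonneg_nonneg) auto
  finally show ?thesis by simp
qed

(* If n+1 values are all >= v and this forces (n+1) (v/T)^5 <= P, then v is bounded by the
   increment of the function n |-> 5/4 T P^(1/5) n^(4/5), which telescopes when summed. *)
lemma level_increment:
  fixes v T P :: real
  assumes T: "0 < T" and P: "0 \<le> P" and level: "(real n + 1) * (v / T)^5 \<le> P"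
  shows "v \<le> 5/4 * T * root 5 P * ((root 5 (real n + 1))^4 - (root 5 (real n))^4)"
proof -
  define a where "a = root 5 (real n)"
  define b where "b = root 5 (real n + 1)"
  define p where "p = root 5 P"
  have a5: "a^5 = real n" and b5: "b^5 = real n + 1" and p5: "p^5 = P"
    using P by (simp_all add: a_def b_def p_def)
  have a0: "0 \<le> a" and p0: "0 \<le> p" and b0: "0 < b"
    using P by (simp_all add: a_def b_def p_def real_root_ge_zero)
  have ab: "a \<le> b" unfolding a_def b_def by (rule real_root_le_mono) auto
  have "(b * v)^5 = b^5 * ((v / T)^5 * T^5)" using T by (simp add: power_mult_distrib power_divide)
  also have "\<dots> = ((real n + 1) * (v / T)^5) * T^5" using b5 by simp
  also have "\<dots> \<le> P * T^5" using level T by (intro mult_right_mono) auto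
  also have "\<dots> = (p * T)^5" using p5 by (simp add: power_mult_distrib)
  finally have fifth_powers: "(b * v)^5 \<le> (p * T)^5" .
  have "b * v \<le> p * T" by (rule power_le_imp_le_base[of _ 4]) (use fifth_powers p0 T in auto)
  moreover have "4 \<le> 5 * b * (b^4 - a^4)" using fifth_power_increment[OF a0 ab] a5 b5 by simp
  then have "p * T * 4 \<le> p * T * (5 * b * (b^4 - a^4))" using p0 T by (intro mult_left_mono) auto
  ultimately have "b * v \<le> b * (5/4 * T * p * (b^4 - a^4))" by (simp add: algebra_simps)
  then show ?thesis using b0 unfolding a_def b_def p_def by simp
qed

(* Induction on |S|, removing the smallest value and applying level_increment to it. *)
lemma sum_of_levels:
  fixes Dv :: "nat \<Rightarrow> real" and B :: "nat set"
  assumes count: "\<And>S v. S \<subseteq> B \<Longrightarrow> S \<noteq> {} \<Longrightarrow> (\<forall>j\<in>S. v \<le> Dv j) \<Longrightarrow> M \<le> v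
               \<Longrightarrow> (real (card S) - 2) * (v / T)^5 \<le> P"
    and large: "\<And>j. j \<in> B \<Longrightarrow> M \<le> Dv j"
    and upper: "\<And>j. j \<in> B \<Longrightarrow> Dv j \<le> Db"
    and Db: "0 \<le> Db" and P: "0 \<le> P" and T: "0 < T" and finB: "finite B"
    and S: "S \<subseteq> B"
  shows "sum Dv S \<le> 2 * Db + 5/4 * T * root 5 P * (root 5 (real (card S - 2)))^4"
  using S
proof (induction "card S" arbitrary: S rule: less_induct)
  case less
  have finS: "finite S" using less(2) finB finite_subset by blast
  show ?case
  proof (cases "card S \<le> 2")
    case True
    have "sum Dv S \<le> real (card S) * Db" using less(2) upper sum_bounded_above[of S Dv Db] by auto
    also have "\<dots> \<le> 2 * Db" using True Db by (intro mult_right_mono) auto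
    finally show ?thesis using T P by (simp add: real_root_ge_zero add_increasing2)
  next
    case False
    define n where "n = card S - 3"
    have cS: "card S = n + 3" using False unfolding n_def by simp
    then have neS: "S \<noteq> {}" by auto
    define v where "v = Min (Dv ` S)"
    have "v \<in> Dv ` S" unfolding v_def using finS neS by simp
    then obtain j0 where j0: "j0 \<in> S" "Dv j0 = v" by auto
    have v_le: "\<forall>j\<in>S. v \<le> Dv j" unfolding v_def using finS by simp
    have "M \<le> v" using j0 less(2) large by auto
    then have "(real n + 1) * (v / T)^5 \<le> P" using count[OF less(2) neS v_le] cS by (simp add: add.commute)
    then have v_bound: "v \<le> 5/4 * T * root 5 P * ((root 5 (real n + 1))^4 - (root 5 (real n))^4)"
      using T P by (rule level_increment[rotated -1])
    have IH: "sum Dv (S - {j0}) \<le> 2 * Db + 5/4 * T * root 5 P * (root 5 (real n))^4"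
      using less(1)[of "S - {j0}"] cS j0 finS less(2) by auto
    have "sum Dv S = v + sum Dv (S - {j0})" using j0 finS by (simp add: sum.remove)
    then show ?thesis using IH v_bound cS by (simp add: algebra_simps)
  qed
qed

(* Young-type inequality splitting 5/4 T (2L)^(1/5) n^(4/5) into a part linear in n and a
   small multiple of L, depending on which of (2L)^(1/5) and q n^(1/5) (q = 8T/kappa0) wins. *)
lemma young_bound:
  fixes T \<kappa>0 L :: real
  assumes \<kappa>0: "0 < \<kappa>0" "\<kappa>0 \<le> 1" and T: "T \<ge> 1" and L: "0 \<le> L"
  shows "5/4 * T * root 5 (2*L) * (root 5 (real n))^4 \<le> real n * (4*T/\<kappa>0)^2 + \<kappa>0/512 * L"
proof -
  define a where "a = root 5 (real n)"
  define p where "p = root 5 (2*L)"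
  define q where "q = 8*T/\<kappa>0"
  have a5: "a^5 = real n" and p5: "p^5 = 2*L" using L by (simp_all add: a_def p_def)
  have a0: "0 \<le> a" and p0: "0 \<le> p" using L by (simp_all add: a_def p_def real_root_ge_zero)
  have q0: "0 < q" unfolding q_def using assms by simp
  have linear_part: "5/4 * T * q \<le> (4*T/\<kappa>0)^2"
  proof -
    have "5/4 * T * q = 10 * T^2/\<kappa>0" unfolding q_def by (simp add: power2_eq_square)
    also have "\<dots> \<le> 16 * T^2/\<kappa>0^2"
      using assms by (simp add: divide_simps power2_eq_square mult_left_le)
    also have "\<dots> = (4*T/\<kappa>0)^2" by (simp add: power_divide)
    finally show ?thesis .
  qed
  have small_part: "5/2 * T \<le> \<kappa>0/512 * q^4"
  proof -
    have "\<kappa>0/512 * q^4 = 8 * T^4/\<kappa>0^3" using assms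
      by (simp add: q_def field_simps power_divide power_mult_distrib eval_nat_numeral)
    moreover have "8 * T^4 \<le> 8 * T^4/\<kappa>0^3" using assms
      by (simp add: le_divide_eq power_le_one mult_left_le)
    moreover have "T * 1 \<le> T * T^3" using T by (intro mult_left_mono) (auto simp: one_le_power)
    then have "5/2 * T \<le> 8 * T^4" using T by (simp add: eval_nat_numeral algebra_simps)
    ultimately show ?thesis by linarith
  qed
  have "5/4 * T * p * a^4 \<le> real n * (4*T/\<kappa>0)^2 + \<kappa>0/512 * L"
  proof (cases "p \<le> q * a")
    case True
    have "5/4 * T * p * a^4 \<le> 5/4 * T * (q * a) * a^4"
      using True T a0 by (intro mult_right_mono mult_left_mono) auto
    also have "\<dots> = real n * (5/4 * T * q)" using a5 by (simp add: eval_nat_numeral algebra_simps)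
    also have "\<dots> \<le> real n * (4*T/\<kappa>0)^2" by (rule mult_left_mono[OF linear_part]) simp
    finally show ?thesis using \<kappa>0 L by (smt (verit) mult_nonneg_nonneg divide_nonneg_pos)
  next
    case False
    then have "a^4 \<le> (p/q)^4" using a0 q0 by (intro power_mono) (auto simp: field_simps)
    then have "5/4 * T * p * a^4 \<le> 5/4 * T * p * (p/q)^4" using T p0 by (intro mult_left_mono) auto
    also have "\<dots> = 5/4 * T * p^5 / q^4" by (simp add: power_divide eval_nat_numeral)
    also have "\<dots> = (5/2 * T) * L / q^4" using p5 by simp
    also have "\<dots> \<le> (\<kappa>0/512 * q^4) * L / q^4"
      using small_part L by (intro divide_right_mono mult_right_mono) auto
    also have "\<dots> = \<kappa>0/512 * L" using q0 by simp
    finally show ?thesis by (smt (verit) zero_le_power2 of_nat_0_le_iff mult_nonneg_nonneg)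
  qed
  then show ?thesis unfolding a_def p_def .
qed

(* Condition (A) quantitatively: two large sites at index distance >= 2 whose D-values are
   >= v >= 4T/kappa0 are joined by a segment of norm >= (v/T)^5.  Since v > T the segment
   norm s exceeds 1, so the exponent alpha0/5 may be replaced by 1/5. *)
lemma gamma_separation:
  assumes gamma: "in_Gamma nrm \<alpha>0 \<Lambda> T \<kappa>0 D ns"
    and \<kappa>0: "0 < \<kappa>0" "\<kappa>0 \<le> 1" and \<alpha>0: "0 < \<alpha>0" "\<alpha>0 \<le> 1" and T: "0 < T"
    and ab: "a + 2 \<le> b" "b < length ns"
    and v: "4*T/\<kappa>0 \<le> v" "v \<le> D (ns ! a)" "v \<le> D (ns ! b)"
  shows "(v/T)^5 \<le> seg_norm nrm \<alpha>0 ns a b"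
proof -
  define s where "s = seg_norm nrm \<alpha>0 ns a b"
  have s0: "0 \<le> s" unfolding s_def by (rule seg_norm_nonneg)
  have vT: "4*T \<le> v" using v(1) \<kappa>0 T by (smt (verit) le_divide_eq mult_left_le)
  have "min (D (ns ! a)) (D (ns ! b)) \<le> T * s powr (\<alpha>0/5)"
    using gamma ab v unfolding in_Gamma_def Let_def s_def by auto
  then have v_le: "v \<le> T * s powr (\<alpha>0/5)" using v by linarith
  have s1: "1 < s"
  proof (rule ccontr)
    assume "\<not> 1 < s"
    then have "s powr (\<alpha>0/5) \<le> s powr 0" using s0 \<alpha>0 by (intro powr_mono') auto
    then have "s powr (\<alpha>0/5) \<le> 1" by (simp add: powr_zero_eq_one split: if_splits)
    then show False using v_le vT T by (smt (verit) mult_left_le)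
  qed
  have "s powr (\<alpha>0/5) \<le> s powr (1/5)" using s1 \<alpha>0 by (intro powr_mono) auto
  then have "v \<le> T * s powr (1/5)" using v_le T by (smt (verit) mult_left_mono)
  then have "v/T \<le> s powr (1/5)" using T by (simp add: divide_le_eq mult.commute)
  moreover have "0 \<le> v/T" using vT T by simp
  ultimately have "(v/T)^5 \<le> (s powr (1/5))^5" by (intro power_mono) auto
  also have "\<dots> = s" using s1 by (simp add: powr_realpow[symmetric] powr_powr)
  finally show ?thesis unfolding s_def .
qed

lemma large_sites_count:
  assumes gamma: "in_Gamma nrm \<alpha>0 \<Lambda> T \<kappa>0 D ns"
    and \<kappa>0: "0 < \<kappa>0" "\<kappa>0 \<le> 1" and \<alpha>0: "0 < \<alpha>0" "\<alpha>0 \<le> 1" and T: "0 < T"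
    and S: "S \<subseteq> {..<length ns}" "S \<noteq> {}" "\<forall>j\<in>S. v \<le> D (ns ! j)" and v: "4*T/\<kappa>0 \<le> v"
  shows "(real (card S) - 2) * (v / T)^5 \<le> 2 * traj_norm nrm \<alpha>0 ns"
proof -
  have finS: "finite S" using S finite_subset by blast
  have "(real (card S) - 2) * (v / T)^5 \<le> 2 * seg_norm nrm \<alpha>0 ns (Min S) (Max S)"
  proof (rule separated_points_count[OF seg_norm_split seg_norm_nonneg _ _ finS S(2)])
    have "0 < 4*T/\<kappa>0" using \<kappa>0 T by simp
    then show "0 \<le> (v/T)^5" using v T by simp
    show "\<And>a b. a \<in> S \<Longrightarrow> b \<in> S \<Longrightarrow> a + 2 \<le> b \<Longrightarrow> (v/T)^5 \<le> seg_norm nrm \<alpha>0 ns a b"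
      using gamma_separation[OF gamma \<kappa>0 \<alpha>0 T] S v by blast
  qed
  moreover have "seg_norm nrm \<alpha>0 ns (Min S) (Max S) \<le> traj_norm nrm \<alpha>0 ns"
    using finS S by (intro seg_norm_le_traj_norm) auto
  ultimately show ?thesis by linarith
qed

lemma gamma_site_sum:
  assumes gamma: "in_Gamma nrm \<alpha>0 \<Lambda> T \<kappa>0 D ns"
    and \<kappa>0: "0 < \<kappa>0" "\<kappa>0 \<le> 1" and \<alpha>0: "0 < \<alpha>0" "\<alpha>0 \<le> 1" and T: "1 \<le> T"
    and D_ge1: "\<And>m. m \<in> \<Lambda> \<Longrightarrow> D m \<ge> 1"
  shows "(\<Sum>j<length ns. D (ns ! j))
           \<le> real (length ns) * (4*T/\<kappa>0)^2 + \<kappa>0/512 * traj_norm nrm \<alpha>0 ns + 2 * Dbar D ns"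
proof -
  define k where "k = length ns"
  define M where "M = 4*T/\<kappa>0"
  define L where "L = traj_norm nrm \<alpha>0 ns"
  define Dv where "Dv = (\<lambda>j. D (ns ! j))"
  define B where "B = {j. j < k \<and> M \<le> Dv j}"
  have traj: "ns \<noteq> []" "set ns \<subseteq> \<Lambda>"
    using gamma unfolding in_Gamma_def Let_def is_trajectory_def by auto
  have Dv_le: "Dv j \<le> Dbar D ns" if "j < k" for j
    using that unfolding Dv_def Dbar_def k_def by (intro Max_ge) auto
  have "1 \<le> Dv 0" using D_ge1 traj nth_mem unfolding Dv_def by blast
  then have Db: "0 \<le> Dbar D ns" using Dv_le[of 0] traj by (simp add: k_def)
  have L: "0 \<le> L" unfolding L_def traj_norm_def by (rule seg_norm_nonneg)
  have M: "1 \<le> M" unfolding M_def using \<kappa>0 T by (simp add: le_divide_eq)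
  have finB: "finite B" and B_sub: "B \<subseteq> {..<k}" unfolding B_def by auto
  have "sum Dv B \<le> 2 * Dbar D ns + 5/4 * T * root 5 (2*L) * (root 5 (real (card B - 2)))^4"
  proof (rule sum_of_levels[where M=M])
    show "(real (card S) - 2) * (v / T)^5 \<le> 2 * L"
      if "S \<subseteq> B" "S \<noteq> {}" "\<forall>j\<in>S. v \<le> Dv j" "M \<le> v" for S v
      using large_sites_count[OF gamma \<kappa>0 \<alpha>0, of S v] that B_sub T
      unfolding Dv_def M_def L_def k_def by auto
  qed (use T L Db finB Dv_le in \<open>auto simp: B_def\<close>)
  also have "\<dots> \<le> 2 * Dbar D ns + real (card B - 2) * M^2 + \<kappa>0/512 * L"
    using young_bound[OF \<kappa>0 T L] by (simp add: M_def)
  finally have large: "sum Dv B \<le> 2 * Dbar D ns + real (card B - 2) * M^2 + \<kappa>0/512 * L" .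
  have "sum Dv ({..<k} - B) \<le> real (card ({..<k} - B)) * M^2"
    using M sum_bounded_above[of "{..<k} - B" Dv "M^2"]
    by (force simp: B_def power2_eq_square intro: order.trans[OF _ mult_right_mono[of 1 M M]])
  moreover have "real (card ({..<k} - B)) + real (card B - 2) \<le> real k"
    using B_sub finB card_mono[OF _ B_sub] by (simp add: card_Diff_subset)
  then have "real (card ({..<k} - B)) * M^2 + real (card B - 2) * M^2 \<le> real k * M^2"
    by (metis distrib_right mult_right_mono zero_le_power2)
  moreover have "sum Dv {..<k} = sum Dv ({..<k} - B) + sum Dv B"
    using B_sub by (simp add: sum.subset_diff)
  ultimately show ?thesis using large unfolding k_def M_def L_def Dv_def by linarith
qed

(* Only condition (A) of Gamma and D >= 1 enter the estimate; the hypotheses on w, the norm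
   axioms and D in G are part of the setting but not needed here. *)
theorem mainTheorem2:
  fixes nrm :: "'a::ab_group_add \<Rightarrow> real"
    and \<Lambda> :: "'a set"
    and w :: "'a \<Rightarrow> 'a \<Rightarrow> real"
    and D :: "'a \<Rightarrow> real"
    and \<kappa>0 \<alpha>0 T M :: real
    and ns :: "'a list"
  assumes nrm_nonneg: "\<And>m. nrm m \<ge> 0"
    and nrm_zero: "\<And>m. nrm m = 0 \<longleftrightarrow> m = 0"
    and nrm_triangle: "\<And>m n. nrm (m + n) \<le> nrm m + nrm n"
    and \<kappa>0: "0 < \<kappa>0" "\<kappa>0 \<le> 1"
    and \<alpha>0: "0 < \<alpha>0" "\<alpha>0 \<le> 1"
    and T: "T \<ge> 8"
    and M_def: "M = 4 * T / \<kappa>0"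
    and w_nonneg: "\<And>m n. m \<in> \<Lambda> \<Longrightarrow> n \<in> \<Lambda> \<Longrightarrow> w m n \<ge> 0"
    and w_diag: "\<And>m. m \<in> \<Lambda> \<Longrightarrow> w m m = 1"
    and w_decay: "\<And>m n. m \<in> \<Lambda> \<Longrightarrow> n \<in> \<Lambda> \<Longrightarrow> w m n \<le> exp (- \<kappa>0 * nrm (m - n) powr \<alpha>0)"
    and D_ge1: "\<And>m. m \<in> \<Lambda> \<Longrightarrow> D m \<ge> 1"
    and D_G: "in_G nrm \<alpha>0 \<Lambda> T \<kappa>0 D"
    and gamma: "in_Gamma nrm \<alpha>0 \<Lambda> T \<kappa>0 D ns"
  shows "W_weight nrm \<alpha>0 D \<kappa>0 ns
           \<le> exp (real (length ns) * M\<^sup>2 - \<kappa>0 * (1 - 2 powr (-9)) * traj_norm nrm \<alpha>0 ns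
                  + 2 * Dbar D ns)"
proof -
  have sites: "(\<Sum>j<length ns. D (ns ! j))
                 \<le> real (length ns) * M^2 + \<kappa>0/512 * traj_norm nrm \<alpha>0 ns + 2 * Dbar D ns"
    using gamma_site_sum[OF gamma \<kappa>0 \<alpha>0 _ D_ge1] T M_def by simp
  have two_pow: "(2::real) powr (-9) = 1/512" by (simp add: powr_minus)
  show ?thesis unfolding W_weight_def two_pow using sites by (simp add: algebra_simps)
qed

end
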